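(* Let $\Omega\subset\mathbb{R}^n$ ($n\ge2$) be open bounded, $\alpha\in[0,n)$, and let $\mathcal{F},\mathcal{G}\in L^1(\Omega;\mathbb{R}^+)$ satisfy $\fint_\Omega\mathcal{G}\,dx\le C_*\fint_\Omega\mathcal{F}\,dx$ for a constant $C_*>0$. Assume that there are $\kappa,\lambda>0$ and a point $z_0\in\Omega$ with $\mathbf{M}_\alpha\mathcal{F}(z_0)\le\kappa\lambda$. Then there is a constant $C>0$ (depending only on $n$, $\alpha$ and $C_*$) such that for every $\sigma>0$, $$d^\alpha_{\mathcal{G}}(\Omega;\sigma\lambda)\le C\Big(\frac\kappa\sigma\Big)^{\frac n{n-\alpha}}\mathrm{diam}(\Omega)^n.$$
   Context: Functions on $\Omega$ are extended by zero outside $\Omega$. $\mathbf{M}_\alpha f(x)=\sup_{\rho>0}\rho^\alpha\fint_{B_\rho(x)}|f|$ with $B_\rho(x)$ the open ball. $d^\alpha_{\mathcal{G}}(E;\lambda)=\mathcal{L}^n(\{x\in E:\mathbf{M}_\alpha\mathcal{G}(x)>\lambda\})$. *)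

theory Defs
  imports "HOL-Analysis.Analysis"
begin

definition frac_max :: "real \<Rightarrow> ('a::euclidean_space) set \<Rightarrow> ('a \<Rightarrow> real) \<Rightarrow> 'a \<Rightarrow> ennreal" where
  "frac_max \<alpha> \<Omega> f x =
     (SUP \<rho>\<in>{0<..}. ennreal (\<rho> powr \<alpha> / measure lebesgue (ball x \<rho>)) *
        (\<integral>\<^sup>+ y. ennreal (\<bar>f y\<bar> * indicator \<Omega> y) * indicator (ball x \<rho>) y \<partial>lebesgue))"

definition distr_fm :: "real \<Rightarrow> ('a::euclidean_space) set \<Rightarrow> ('a \<Rightarrow> real) \<Rightarrow> 'a set \<Rightarrow> real \<Rightarrow> ennreal" where
  "distr_fm \<alpha> \<Omega> G E lam = emeasure lebesgue {x \<in> E. frac_max \<alpha> \<Omega> G x > ennreal lam}"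

end

theory Submission
  imports Defs
begin

(* If g is nonnegative with total integral at most A, every point where M_alpha g exceeds t is the
   centre of a ball B of radius r with t |B| < r^alpha g(B). Since g(B) <= A, such radii are bounded by
   R = (A / (t omega_n))^(1/(n - alpha)), and then |B| <= (R^alpha / t) g(B); the Vitali covering lemma
   yields the weak-type bound 5^n omega_n (A / (t omega_n))^(n/(n - alpha)).
   Testing M_alpha F(z0) <= kappa lam on the ball of radius diam Omega about z0, which contains Omega up
   to a null sphere, gives int F <= kappa lam omega_n (diam Omega)^(n - alpha); the mean comparison turns
   this into a bound on int G, and the weak-type bound at t = sigma lam is the claim.
   The argument works in every dimension. *)

lemma emeasure_lborel_ball_scale:
  fixes c :: "'a::euclidean_space"
  assumes "0 \<le> r" "0 \<le> s"
  shows "emeasure lborel (ball c (s * r)) = ennreal s ^ DIM('a) * emeasure lborel (ball c r)"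
  using assms by (simp add: emeasure_ball ennreal_power[symmetric] ennreal_mult' power_mult_distrib mult_ac)

lemma diameter_open_pos:
  fixes S :: "'a::euclidean_space set"
  assumes "open S" "bounded S" "x \<in> S"
  shows "0 < diameter S"
proof -
  obtain e where "0 < e" "ball x e \<subseteq> S"
    using assms open_contains_ball by blast
  then have "diameter (ball x e) \<le> diameter S"
    using assms(2) by (intro diameter_subset) auto
  with \<open>0 < e\<close> show ?thesis by simp
qed

lemma measure_open_pos:
  fixes S :: "'a::euclidean_space set"
  assumes "open S" "bounded S" "x \<in> S"
  shows "0 < measure lebesgue S"
proof -
  obtain e where "0 < e" "ball x e \<subseteq> S"
    using assms open_contains_ball by blast
  then have "measure lebesgue (ball x e) \<le> measure lebesgue S"
    using lmeasurable_open[OF assms(2,1)] by (intro measure_mono_fmeasurable) auto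
  moreover have "0 < measure lebesgue (ball x e)"
    using \<open>0 < e\<close> by (simp add: content_ball)
  ultimately show ?thesis by linarith
qed

lemma emeasure_UN_countable_le:
  assumes sets[measurable]: "\<And>i. i \<in> I \<Longrightarrow> X i \<in> sets M" and I[simp]: "countable I"
  shows "emeasure M (\<Union>(X ` I)) \<le> (\<integral>\<^sup>+i. emeasure M (X i) \<partial>count_space I)"
proof -
  have cover: "indicator (\<Union>(X ` I)) x \<le> (\<integral>\<^sup>+ i. indicator (X i) x \<partial>count_space I)" for x
  proof (cases "x \<in> \<Union>(X ` I)")
    case True
    then obtain j where j: "x \<in> X j" "j \<in> I"
      by auto
    then have "(1::ennreal) = (\<integral>\<^sup>+ i. indicator {j} i \<partial>count_space I)"
      by (simp add: nn_integral_count_space_indicator)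
    also have "\<dots> \<le> (\<integral>\<^sup>+ i. indicator (X i) x \<partial>count_space I)"
      using j by (intro nn_integral_mono) (auto split: split_indicator)
    finally show ?thesis using True by simp
  qed simp
  note sets.countable_UN'[unfolded subset_eq, measurable]
  have "emeasure M (\<Union>(X ` I)) = (\<integral>\<^sup>+x. indicator (\<Union>(X ` I)) x \<partial>M)"
    by simp
  also have "\<dots> \<le> (\<integral>\<^sup>+x. \<integral>\<^sup>+ i. indicator (X i) x \<partial>count_space I \<partial>M)"
    by (intro nn_integral_mono cover)
  also have "\<dots> = (\<integral>\<^sup>+i. \<integral>\<^sup>+x. indicator (X i) x \<partial>M \<partial>count_space I)"
    by (simp add: nn_integral_count_space_nn_integral)
  finally show ?thesis
    by (simp cong: nn_integral_cong_simp)
qed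

lemma emeasure_le_Vitali_cover:
  fixes E :: "'a::euclidean_space set" and c :: ennreal
  assumes sets_\<mu>: "sets \<mu> = sets lebesgue"
    and r: "\<And>x. x \<in> E \<Longrightarrow> 0 < r x \<and> r x \<le> R"
    and dens: "\<And>x. x \<in> E \<Longrightarrow> emeasure lebesgue (ball x (r x)) \<le> c * emeasure \<mu> (ball x (r x))"
  shows "emeasure lebesgue E \<le> 5 ^ DIM('a) * c * emeasure \<mu> (space \<mu>)"
proof -
  have cover: "E \<subseteq> (\<Union>x\<in>E. ball x (r x))"
    using r by (meson UN_I centre_in_ball subsetI)
  obtain C where C: "countable C" "C \<subseteq> E"
    and disj: "pairwise (\<lambda>i j. disjnt (ball i (r i)) (ball j (r j))) C"
    and cov: "E \<subseteq> (\<Union>i\<in>C. ball i (5 * r i))"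
    by (rule Vitali_covering_lemma_balls[where a="\<lambda>x. x", OF cover r]) auto
  have "emeasure lebesgue E \<le> emeasure lebesgue (\<Union>i\<in>C. ball i (5 * r i))"
    using C cov by (intro emeasure_mono sets.countable_UN') auto
  also have "\<dots> \<le> (\<integral>\<^sup>+i. emeasure lebesgue (ball i (5 * r i)) \<partial>count_space C)"
    using C by (intro emeasure_UN_countable_le) auto
  also have "\<dots> = (\<integral>\<^sup>+i. 5 ^ DIM('a) * emeasure lebesgue (ball i (r i)) \<partial>count_space C)"
    using C r by (intro nn_integral_cong) (auto simp: emeasure_lborel_ball_scale less_imp_le)
  also have "\<dots> \<le> (\<integral>\<^sup>+i. 5 ^ DIM('a) * (c * emeasure \<mu> (ball i (r i))) \<partial>count_space C)"
    using C dens by (intro nn_integral_mono mult_left_mono) auto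
  also have "\<dots> = 5 ^ DIM('a) * c * emeasure \<mu> (\<Union>i\<in>C. ball i (r i))"
    using C disj sets_\<mu>
    by (subst emeasure_UN_countable)
       (auto simp: nn_integral_cmult pairwise_def disjnt_def disjoint_family_on_def mult.assoc)
  also have "\<dots> \<le> 5 ^ DIM('a) * c * emeasure \<mu> (space \<mu>)"
    by (intro mult_left_mono emeasure_space) auto
  finally show ?thesis .
qed

lemma fractional_average_radius_bound:
  fixes \<omega> N \<alpha> \<rho> t m A :: real
  assumes "0 < \<rho>" "0 < t" "0 < \<omega>" "0 \<le> \<alpha>" "\<alpha> < N" "m \<le> A"
    and avg: "t < \<rho> powr \<alpha> / (\<omega> * \<rho> powr N) * m"
  defines "R \<equiv> (A / (t * \<omega>)) powr (1 / (N - \<alpha>))"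
  shows "\<rho> < R" and "\<omega> * \<rho> powr N \<le> R powr \<alpha> / t * m"
proof -
  have m: "t * \<omega> * \<rho> powr (N - \<alpha>) < m"
    using avg assms(1-3) by (simp add: powr_diff field_simps)
  then have "\<rho> powr (N - \<alpha>) < A / (t * \<omega>)"
    using assms(2,3,6) by (simp add: field_simps)
  then have "(\<rho> powr (N - \<alpha>)) powr (1 / (N - \<alpha>)) < R"
    unfolding R_def using assms(5) by (intro powr_less_mono2) auto
  then show "\<rho> < R"
    using assms(1,5) by (simp add: powr_powr)
  then have "\<rho> powr \<alpha> \<le> R powr \<alpha>"
    using assms(1,4) by (intro powr_mono2) auto
  moreover have "\<omega> * \<rho> powr (N - \<alpha>) \<le> m / t"
    using m assms(2) by (simp add: field_simps)
  ultimately have "\<rho> powr \<alpha> * (\<omega> * \<rho> powr (N - \<alpha>)) \<le> R powr \<alpha> * (m / t)"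
    using assms(3) by (intro mult_mono) auto
  then show "\<omega> * \<rho> powr N \<le> R powr \<alpha> / t * m"
    using assms(1) by (simp add: powr_diff field_simps)
qed

lemma emeasure_fractional_maximal_gt_le:
  fixes E :: "'a::euclidean_space set" and A t \<alpha> :: real
  assumes sets_\<mu>: "sets \<mu> = sets lebesgue" and \<mu>: "emeasure \<mu> (space \<mu>) \<le> ennreal A"
    and A: "0 < A" and t: "0 < t" and \<alpha>: "0 \<le> \<alpha>" "\<alpha> < DIM('a)"
    and E: "\<And>x. x \<in> E \<Longrightarrow> \<exists>\<rho>>0. ennreal t <
              ennreal (\<rho> powr \<alpha> / measure lebesgue (ball x \<rho>)) * emeasure \<mu> (ball x \<rho>)"
  shows "emeasure lebesgue E \<le> ennreal (5 ^ DIM('a) * unit_ball_vol DIM('a) *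
           (A / (t * unit_ball_vol DIM('a))) powr (DIM('a) / (DIM('a) - \<alpha>)))"
proof -
  define \<omega> N where "\<omega> = unit_ball_vol DIM('a)" and "N = real DIM('a)"
  define R where "R = (A / (t * \<omega>)) powr (1 / (N - \<alpha>))"
  define c where "c = R powr \<alpha> / t"
  have "0 \<le> c"
    using t by (simp add: c_def)
  have \<omega>: "0 < \<omega>"
    unfolding \<omega>_def by simp
  have "\<exists>\<rho>. 0 < \<rho> \<and> \<rho> \<le> R \<and>
      emeasure lebesgue (ball x \<rho>) \<le> ennreal c * emeasure \<mu> (ball x \<rho>)"
    if x: "x \<in> E" for x
  proof -
    obtain \<rho> where \<rho>: "0 < \<rho>" and avg: "ennreal t <
        ennreal (\<rho> powr \<alpha> / measure lebesgue (ball x \<rho>)) * emeasure \<mu> (ball x \<rho>)"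
      using E[OF x] by blast
    have "emeasure \<mu> (ball x \<rho>) \<le> ennreal A"
      using \<mu> emeasure_space order_trans by blast
    then obtain m where m: "emeasure \<mu> (ball x \<rho>) = ennreal m" "0 \<le> m" "m \<le> A"
      using A by (cases "emeasure \<mu> (ball x \<rho>)") (auto simp: ennreal_le_iff top_unique)
    have ball_e: "emeasure lebesgue (ball x \<rho>) = ennreal (\<omega> * \<rho> powr N)"
      using \<rho> by (simp add: emeasure_ball \<omega>_def N_def powr_realpow)
    then have ball: "measure lebesgue (ball x \<rho>) = \<omega> * \<rho> powr N"
      using \<rho> \<omega> by (simp add: measure_def del: measure_completion)
    have "t < \<rho> powr \<alpha> / (\<omega> * \<rho> powr N) * m"
      using avg m ball \<rho> \<omega> t by (simp add: ennreal_mult''[symmetric] ennreal_less_iff)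
    from fractional_average_radius_bound[OF \<rho> t \<omega> \<alpha>(1) _ \<open>m \<le> A\<close> this]
    have "\<rho> < R" "\<omega> * \<rho> powr N \<le> c * m"
      using \<alpha>(2) unfolding R_def N_def c_def by auto
    then show ?thesis
      using \<rho> m ball_e t by (intro exI[of _ \<rho>]) (auto simp: ennreal_mult''[symmetric] ennreal_leI)
  qed
  then obtain r where r: "\<And>x. x \<in> E \<Longrightarrow> 0 < r x \<and> r x \<le> R"
    and dens: "\<And>x. x \<in> E \<Longrightarrow>
      emeasure lebesgue (ball x (r x)) \<le> ennreal c * emeasure \<mu> (ball x (r x))"
    by metis
  have "emeasure lebesgue E \<le> 5 ^ DIM('a) * ennreal c * emeasure \<mu> (space \<mu>)"
    using emeasure_le_Vitali_cover[OF sets_\<mu> r dens] .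
  also have "\<dots> \<le> 5 ^ DIM('a) * ennreal c * ennreal A"
    by (intro mult_left_mono \<mu>) auto
  also have "\<dots> = ennreal (5 ^ DIM('a) * (c * A))"
    using \<open>0 \<le> c\<close> A by (simp add: ennreal_mult ennreal_power[symmetric] mult.assoc)
  also have "c * A = \<omega> * (A / (t * \<omega>)) powr (N / (N - \<alpha>))"
  proof -
    define Q where "Q = A / (t * \<omega>)"
    have "0 < Q" "0 < N - \<alpha>"
      using A t \<omega> \<alpha> by (auto simp: Q_def N_def)
    have "c * A = Q powr (\<alpha> / (N - \<alpha>)) * (\<omega> * Q)"
      using t \<omega> by (simp add: c_def R_def Q_def powr_powr field_simps)
    also have "\<dots> = \<omega> * Q powr (\<alpha> / (N - \<alpha>) + 1)"
      using \<open>0 < Q\<close> by (simp add: powr_add)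
    also have "\<alpha> / (N - \<alpha>) + 1 = N / (N - \<alpha>)"
      using \<open>0 < N - \<alpha>\<close> by (simp add: field_simps)
    finally show ?thesis
      unfolding Q_def .
  qed
  finally show ?thesis
    unfolding \<omega>_def N_def by (simp add: mult.assoc)
qed

lemma distr_fm_le:
  fixes \<Omega> E :: "'a::euclidean_space set" and A t \<alpha> :: real
  assumes f: "set_integrable lebesgue \<Omega> f"
    and int: "(\<integral>\<^sup>+y. ennreal (\<bar>f y\<bar> * indicator \<Omega> y) \<partial>lebesgue) \<le> ennreal A"
    and "0 < A" "0 < t" "0 \<le> \<alpha>" "\<alpha> < DIM('a)"
  shows "distr_fm \<alpha> \<Omega> f E t \<le> ennreal (5 ^ DIM('a) * unit_ball_vol DIM('a) *
           (A / (t * unit_ball_vol DIM('a))) powr (DIM('a) / (DIM('a) - \<alpha>)))"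
  unfolding distr_fm_def
proof (rule emeasure_fractional_maximal_gt_le)
  have "(\<lambda>y. \<bar>indicator \<Omega> y *\<^sub>R f y\<bar>) \<in> borel_measurable lebesgue"
    using f unfolding set_integrable_def by measurable
  then have meas: "(\<lambda>y. ennreal (\<bar>f y\<bar> * indicator \<Omega> y)) \<in> borel_measurable lebesgue"
    by (simp add: abs_mult mult.commute)
  let ?\<mu> = "density lebesgue (\<lambda>y. ennreal (\<bar>f y\<bar> * indicator \<Omega> y))"
  show "sets ?\<mu> = sets lebesgue"
    by simp
  show "emeasure ?\<mu> (space ?\<mu>) \<le> ennreal A"
    using meas int by (simp add: emeasure_density)
  show "\<exists>\<rho>>0. ennreal t < ennreal (\<rho> powr \<alpha> / measure lebesgue (ball x \<rho>)) * emeasure ?\<mu> (ball x \<rho>)"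
    if "x \<in> {x \<in> E. ennreal t < frac_max \<alpha> \<Omega> f x}" for x
    using that meas by (auto simp: frac_max_def less_SUP_iff emeasure_density)
qed (use assms in auto)

lemma nn_integral_le_frac_max:
  fixes \<Omega> :: "'a::euclidean_space set" and K \<alpha> :: real
  assumes "open \<Omega>" "bounded \<Omega>" "z \<in> \<Omega>" and K: "frac_max \<alpha> \<Omega> f z \<le> ennreal K"
  shows "(\<integral>\<^sup>+y. ennreal (\<bar>f y\<bar> * indicator \<Omega> y) \<partial>lebesgue)
           \<le> ennreal (K * unit_ball_vol DIM('a) * diameter \<Omega> powr (DIM('a) - \<alpha>))"
proof -
  define d \<omega> N where "d = diameter \<Omega>" and "\<omega> = unit_ball_vol DIM('a)" and "N = real DIM('a)"
  let ?I = "\<integral>\<^sup>+y. ennreal (\<bar>f y\<bar> * indicator \<Omega> y) \<partial>lebesgue"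
  have d: "0 < d"
    unfolding d_def using assms(1-3) by (rule diameter_open_pos)
  have \<omega>: "0 < \<omega>"
    unfolding \<omega>_def by simp
  have "\<Omega> \<subseteq> cball z d"
    using diameter_bounded_bound[OF assms(2,3)] by (auto simp: d_def)
  moreover have "AE y in lebesgue. y \<notin> sphere z d"
    using negligible_sphere[of z d] unfolding negligible_iff_null_sets by (rule AE_not_in)
  ultimately have "(\<integral>\<^sup>+y. ennreal (\<bar>f y\<bar> * indicator \<Omega> y) * indicator (ball z d) y \<partial>lebesgue) = ?I"
    by (intro nn_integral_cong_AE, elim eventually_mono) (auto split: split_indicator)
  then have "ennreal (d powr \<alpha> / (\<omega> * d powr N)) * ?I \<le> frac_max \<alpha> \<Omega> f z"
    unfolding frac_max_def using d
    by (intro SUP_upper2[of d]) (auto simp: content_ball \<omega>_def N_def powr_realpow)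
  also note K
  finally have low: "ennreal (d powr \<alpha> / (\<omega> * d powr N)) * ?I \<le> ennreal K" .
  have "?I = ennreal (\<omega> * d powr (N - \<alpha>)) * (ennreal (d powr \<alpha> / (\<omega> * d powr N)) * ?I)"
    using d \<omega> by (simp add: mult.assoc[symmetric] ennreal_mult[symmetric] powr_diff)
  also have "\<dots> \<le> ennreal (\<omega> * d powr (N - \<alpha>)) * ennreal K"
    by (intro mult_left_mono low) auto
  also have "\<dots> = ennreal (K * \<omega> * d powr (N - \<alpha>))"
    using d \<omega> by (simp add: ennreal_mult''[symmetric] mult_ac)
  finally show ?thesis
    unfolding d_def \<omega>_def N_def .
qed

lemma nn_integral_abs_indicator_eq_set_integral:
  assumes "set_integrable M S f" "\<And>x. x \<in> S \<Longrightarrow> 0 \<le> f x"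
  shows "(\<integral>\<^sup>+y. ennreal (\<bar>f y\<bar> * indicator S y) \<partial>M) = ennreal (set_lebesgue_integral M S f)"
proof -
  have "(\<integral>\<^sup>+y. ennreal (\<bar>f y\<bar> * indicator S y) \<partial>M) = (\<integral>\<^sup>+y. ennreal (indicator S y *\<^sub>R f y) \<partial>M)"
    using assms(2) by (intro nn_integral_cong) (auto split: split_indicator)
  also have "\<dots> = ennreal (LINT y|M. indicator S y *\<^sub>R f y)"
    using assms(1) unfolding set_integrable_def
    by (intro nn_integral_eq_integral) (auto simp: assms(2) split: split_indicator)
  finally show ?thesis
    unfolding set_lebesgue_integral_def .
qed

lemma distr_fm_le_of_frac_max_le:
  fixes \<Omega> :: "'a::euclidean_space set" and \<alpha> Cstar \<kappa> lam \<sigma> :: real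
  assumes \<Omega>: "open \<Omega>" "bounded \<Omega>" "z \<in> \<Omega>"
    and F: "set_integrable lebesgue \<Omega> F" "\<forall>x\<in>\<Omega>. 0 \<le> F x"
    and G: "set_integrable lebesgue \<Omega> G" "\<forall>x\<in>\<Omega>. 0 \<le> G x"
    and avg: "(set_lebesgue_integral lebesgue \<Omega> G) / measure lebesgue \<Omega>
      \<le> Cstar * ((set_lebesgue_integral lebesgue \<Omega> F) / measure lebesgue \<Omega>)"
    and pos: "0 < Cstar" "0 < \<kappa>" "0 < lam" "0 < \<sigma>"
    and \<alpha>: "0 \<le> \<alpha>" "\<alpha> < DIM('a)"
    and fm: "frac_max \<alpha> \<Omega> F z \<le> ennreal (\<kappa> * lam)"
  defines "p \<equiv> DIM('a) / (DIM('a) - \<alpha>)"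
  shows "distr_fm \<alpha> \<Omega> G \<Omega> (\<sigma> * lam) \<le> ennreal (5 ^ DIM('a) * unit_ball_vol DIM('a) *
           Cstar powr p * (\<kappa> / \<sigma>) powr p * diameter \<Omega> ^ DIM('a))"
proof -
  define d \<omega> N where "d = diameter \<Omega>" and "\<omega> = unit_ball_vol DIM('a)" and "N = real DIM('a)"
  define A where "A = Cstar * \<kappa> * lam * \<omega> * d powr (N - \<alpha>)"
  have d: "0 < d"
    unfolding d_def using \<Omega> by (rule diameter_open_pos)
  have \<omega>: "0 < \<omega>"
    unfolding \<omega>_def by simp
  have "ennreal (set_lebesgue_integral lebesgue \<Omega> F) \<le> ennreal (\<kappa> * lam * \<omega> * d powr (N - \<alpha>))"
    using nn_integral_le_frac_max[OF \<Omega> fm] F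
    by (simp add: nn_integral_abs_indicator_eq_set_integral d_def \<omega>_def N_def)
  then have IF: "set_lebesgue_integral lebesgue \<Omega> F \<le> \<kappa> * lam * \<omega> * d powr (N - \<alpha>)"
    using pos \<omega> by (simp add: ennreal_le_iff)
  have "set_lebesgue_integral lebesgue \<Omega> G \<le> Cstar * set_lebesgue_integral lebesgue \<Omega> F"
    using avg measure_open_pos[OF \<Omega>] by (simp add: field_simps)
  also have "\<dots> \<le> A"
    using IF pos(1) by (simp add: A_def mult.assoc)
  finally have "(\<integral>\<^sup>+y. ennreal (\<bar>G y\<bar> * indicator \<Omega> y) \<partial>lebesgue) \<le> ennreal A"
    using G by (simp add: nn_integral_abs_indicator_eq_set_integral ennreal_leI)
  then have "distr_fm \<alpha> \<Omega> G \<Omega> (\<sigma> * lam) \<le> ennreal (5 ^ DIM('a) * \<omega> * (A / (\<sigma> * lam * \<omega>)) powr p)"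
    unfolding p_def \<omega>_def
    by (rule distr_fm_le[OF G(1)]) (use pos \<alpha> \<omega> d in \<open>auto simp: A_def\<close>)
  also have "A / (\<sigma> * lam * \<omega>) = Cstar * (\<kappa> / \<sigma>) * d powr (N - \<alpha>)"
    using pos \<omega> by (simp add: A_def field_simps)
  also have "(Cstar * (\<kappa> / \<sigma>) * d powr (N - \<alpha>)) powr p = Cstar powr p * (\<kappa> / \<sigma>) powr p * d ^ DIM('a)"
  proof -
    have "(d powr (N - \<alpha>)) powr p = d ^ DIM('a)"
      using d \<alpha>(2) by (simp add: powr_powr p_def N_def powr_realpow)
    then show ?thesis
      using pos d by (simp add: powr_mult del: times_divide_eq_right)
  qed
  finally show ?thesis
    unfolding d_def \<omega>_def by (simp add: mult.assoc)
qed

theorem mainTheorem5: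
  fixes \<alpha> Cstar :: real
  assumes n2: "CARD('n::finite) \<ge> 2"
    and \<alpha>: "0 \<le> \<alpha>" "\<alpha> < real CARD('n)"
    and Cstar: "Cstar > 0"
  shows "\<exists>C>0. \<forall>(\<Omega>::(real^'n) set) F G \<kappa> lam z0.
     open \<Omega> \<longrightarrow> bounded \<Omega> \<longrightarrow>
     set_integrable lebesgue \<Omega> F \<longrightarrow> set_integrable lebesgue \<Omega> G \<longrightarrow>
     (\<forall>x\<in>\<Omega>. F x \<ge> 0) \<longrightarrow> (\<forall>x\<in>\<Omega>. G x \<ge> 0) \<longrightarrow>
     (set_lebesgue_integral lebesgue \<Omega> G) / measure lebesgue \<Omega>
        \<le> Cstar * ((set_lebesgue_integral lebesgue \<Omega> F) / measure lebesgue \<Omega>) \<longrightarrow>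
     \<kappa> > 0 \<longrightarrow> lam > 0 \<longrightarrow> z0 \<in> \<Omega> \<longrightarrow>
     frac_max \<alpha> \<Omega> F z0 \<le> ennreal (\<kappa> * lam) \<longrightarrow>
     (\<forall>\<sigma>>0. distr_fm \<alpha> \<Omega> G \<Omega> (\<sigma> * lam)
        \<le> ennreal (C * (\<kappa> / \<sigma>) powr (real CARD('n) / (real CARD('n) - \<alpha>)) * diameter \<Omega> ^ CARD('n)))"
proof (intro exI[of _ "5 ^ CARD('n) * unit_ball_vol CARD('n) *
                         Cstar powr (real CARD('n) / (real CARD('n) - \<alpha>))"] conjI allI impI)
  show "0 < 5 ^ CARD('n) * unit_ball_vol CARD('n) * Cstar powr (real CARD('n) / (real CARD('n) - \<alpha>))"
    using Cstar by simp
qed (rule distr_fm_le_of_frac_max_le[where 'a="real^'n", simplified]; use \<alpha> Cstar in simp)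

end
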